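(* Let $A,C\in\mathbb{C}^{n\times n}$ be Hermitian positive semidefinite. Then $\|I+AC\|\ge 1$, and equality holds if and only if $AC=0$.
   Context: $\|\cdot\|$ is the spectral (operator) norm. *)

theory Defs
  imports "HOL-Analysis.Analysis"
begin

definition adjoint_mat :: "complex^'n^'n \<Rightarrow> complex^'n^'n" where
  "adjoint_mat A = (\<chi> i j. cnj (A $ j $ i))"

definition hermitian_mat :: "complex^'n^'n \<Rightarrow> bool" where
  "hermitian_mat A \<longleftrightarrow> adjoint_mat A = A"

definition hpsd :: "complex^'n^'n \<Rightarrow> bool" where
  "hpsd A \<longleftrightarrow> hermitian_mat A \<and>
     (\<forall>x::complex^'n. 0 \<le> Re (\<Sum>i\<in>UNIV. cnj (x $ i) * (A *v x) $ i))"

definition spec_norm :: "complex^'n^'n \<Rightarrow> real" where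
  "spec_norm A = onorm (\<lambda>x::complex^'n. A *v x)"

end

theory Submission
  imports Defs
begin

text \<open>
  For positive semidefinite \<open>A\<close>, \<open>C\<close> put \<open>g = AC\<close>, \<open>f = I + g\<close> and \<open>\<Phi> v = \<langle>v, Cv\<rangle>\<close>.
  Both cross terms in \<open>\<Phi> (f v)\<close> equal \<open>\<langle>Cv, ACv\<rangle> \<ge> 0\<close>, so \<open>\<Phi> (f v) \<ge> \<Phi> v + \<Phi> (g v)\<close>; since \<open>f\<close>
  and \<open>g\<close> commute this gives \<open>\<Phi> (f\<^sup>k u) \<ge> \<Phi> u + k \<Phi> (g u)\<close>. If \<open>\<parallel>f\<parallel> \<le> 1\<close> the left side is
  bounded, so \<open>\<Phi> (g u) = 0\<close>, whence \<open>C g u = 0\<close>, \<open>\<langle>Cu, ACu\<rangle> = 0\<close> and finally \<open>ACu = 0\<close>.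
  As \<open>\<parallel>I\<parallel> = 1\<close>, this yields both the inequality and its equality case.
\<close>

text \<open>Positive semidefiniteness with respect to the real inner product of the underlying space;
  on \<open>complex^'n\<close> this is the real part of the Hermitian inner product.\<close>

definition psd_operator :: "('a::real_inner \<Rightarrow> 'a) \<Rightarrow> bool" where
  "psd_operator T \<longleftrightarrow> linear T \<and> (\<forall>x y. inner x (T y) = inner (T x) y) \<and> (\<forall>x. 0 \<le> inner x (T x))"

lemma psd_operator_inner_eq_zero_imp_zero:
  assumes "psd_operator T" and "inner x (T x) = 0"
  shows "T x = 0"
proof -
  have lin: "linear T" and sym: "\<And>x y. inner x (T y) = inner (T x) y"
    and pos: "\<And>z. 0 \<le> inner z (T z)"
    using assms(1) unfolding psd_operator_def by auto
  define w where "w = T x"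
  define a where "a = inner w w"
  define c where "c = inner w (T w)"
  have "c \<ge> 0" using pos c_def by auto
  have quadratic: "0 \<le> 2 * t * a + t\<^sup>2 * c" for t :: real
  proof -
    have "0 \<le> inner (x + t *\<^sub>R w) (T (x + t *\<^sub>R w))" by (rule pos)
    also have "\<dots> = inner x (T x) + t * inner x (T w) + t * inner w (T x) + t\<^sup>2 * c"
      by (simp add: linear_add[OF lin] linear_scale[OF lin] inner_add_left inner_add_right
          c_def power2_eq_square algebra_simps)
    also have "inner x (T w) = a" using sym[of x w] by (simp add: a_def w_def inner_commute)
    also have "inner w (T x) = a" by (simp add: a_def w_def)
    finally show ?thesis using assms(2) by (simp add: mult_ac)
  qed
  \<comment> \<open>A function \<open>2ta + t\<^sup>2c\<close> that is nonnegative for all \<open>t\<close> has no linear term.\<close>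
  have "a = 0"
  proof (rule ccontr)
    assume "a \<noteq> 0"
    then have "a > 0" by (simp add: a_def)
    define t where "t = - a / (c + 1)"
    have a_eq: "a = - t * (c + 1)" using \<open>c \<ge> 0\<close> by (simp add: t_def)
    with \<open>a > 0\<close> have "t \<noteq> 0" by auto
    have "2 * t * a + t\<^sup>2 * c = - (t\<^sup>2 * (c + 2))"
      by (simp add: a_eq power2_eq_square algebra_simps)
    moreover have "t\<^sup>2 * (c + 2) > 0" using \<open>t \<noteq> 0\<close> \<open>c \<ge> 0\<close> by (intro mult_pos_pos) auto
    ultimately show False using quadratic[of t] by linarith
  qed
  then show ?thesis by (simp add: a_def w_def)
qed

lemma psd_operator_quadratic_form_iterate_ge:
  assumes S: "psd_operator S" and T: "psd_operator T"
  defines "f \<equiv> \<lambda>v. v + S (T v)"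
  shows "inner ((f ^^ k) u) (T ((f ^^ k) u)) \<ge> inner u (T u) + real k * inner (S (T u)) (T (S (T u)))"
proof -
  define \<Phi> where "\<Phi> = (\<lambda>v. inner v (T v))"
  define g where "g = (\<lambda>v. S (T v))"
  have linS: "linear S" and linT: "linear T" and symT: "\<And>x y. inner x (T y) = inner (T x) y"
    and posS: "\<And>z. 0 \<le> inner z (S z)" and posT: "\<And>z. 0 \<le> \<Phi> z"
    using S T unfolding psd_operator_def \<Phi>_def by auto
  have step: "\<Phi> (f v) \<ge> \<Phi> v + \<Phi> (g v)" for v
  proof -
    have "\<Phi> (f v) = \<Phi> v + inner v (T (g v)) + inner (g v) (T v) + \<Phi> (g v)"
      by (simp add: \<Phi>_def f_def g_def linear_add[OF linT] inner_add_left inner_add_right)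
    moreover have "inner v (T (g v)) = inner (T v) (S (T v))"
      using symT[of v "g v"] by (simp add: g_def)
    moreover have "inner (g v) (T v) = inner (T v) (S (T v))"
      by (simp add: g_def inner_commute)
    ultimately show ?thesis using posS[of "T v"] by linarith
  qed
  have commute: "g ((f ^^ k) v) = (f ^^ k) (g v)" for k v
    by (induction k)
      (simp_all add: f_def g_def linear_add[OF linS] linear_add[OF linT])
  have mono: "\<Phi> ((f ^^ k) w) \<ge> \<Phi> w" for k w
  proof (induction k)
    case (Suc k)
    then show ?case using step[of "(f ^^ k) w"] posT[of "g ((f ^^ k) w)"] by simp
  qed simp
  have "\<Phi> ((f ^^ k) u) \<ge> \<Phi> u + real k * \<Phi> (g u)"
  proof (induction k)
    case (Suc k)
    have "\<Phi> ((f ^^ Suc k) u) \<ge> \<Phi> ((f ^^ k) u) + \<Phi> ((f ^^ k) (g u))"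
      using step[of "(f ^^ k) u"] commute[where k=k and v=u] by simp
    then show ?case using Suc mono[where k=k and w="g u"] by (simp add: algebra_simps)
  qed simp
  then show ?thesis by (simp add: \<Phi>_def g_def)
qed

lemma psd_operator_comp_eq_zero_if_nonexpansive:
  assumes S: "psd_operator S" and T: "psd_operator T" and "bounded_linear T"
    and nonexp: "\<And>v. norm (v + S (T v)) \<le> norm v"
  shows "S (T u) = 0"
proof -
  define f where "f = (\<lambda>v. v + S (T v))"
  define \<Phi> where "\<Phi> = (\<lambda>v. inner v (T v))"
  have posT: "\<And>z. 0 \<le> \<Phi> z" using T unfolding psd_operator_def \<Phi>_def by auto
  obtain K where K: "\<And>x. norm (T x) \<le> norm x * K" "K \<ge> 0"
    using bounded_linear.nonneg_bounded[OF \<open>bounded_linear T\<close>] by blast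
  have quadratic_bound: "\<Phi> x \<le> K * (norm x)\<^sup>2" for x
  proof -
    have "\<Phi> x \<le> norm x * norm (T x)" unfolding \<Phi>_def by (rule norm_cauchy_schwarz)
    also have "\<dots> \<le> norm x * (norm x * K)" by (rule mult_left_mono[OF K(1) norm_ge_zero])
    finally show ?thesis by (simp add: power2_eq_square mult_ac)
  qed
  have "norm ((f ^^ k) u) \<le> norm u" for k
    by (induction k) (auto simp: f_def intro: order_trans[OF nonexp])
  then have iterate_bound: "K * (norm ((f ^^ k) u))\<^sup>2 \<le> K * (norm u)\<^sup>2" for k
    by (intro mult_left_mono[OF power_mono] K(2)) simp_all
  have bounded: "\<Phi> u + real k * \<Phi> (S (T u)) \<le> K * (norm u)\<^sup>2" for k
    using psd_operator_quadratic_form_iterate_ge[OF S T, where k=k and u=u]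
      quadratic_bound[of "(f ^^ k) u"] iterate_bound[of k]
    unfolding f_def \<Phi>_def by linarith
  have "\<Phi> (S (T u)) = 0"
  proof (rule ccontr)
    assume "\<Phi> (S (T u)) \<noteq> 0"
    with posT[of "S (T u)"] have pos: "\<Phi> (S (T u)) > 0" by linarith
    obtain k :: nat where "K * (norm u)\<^sup>2 / \<Phi> (S (T u)) < real k"
      using reals_Archimedean2 by blast
    with pos have "K * (norm u)\<^sup>2 < real k * \<Phi> (S (T u))" by (simp add: divide_less_eq)
    then show False using bounded[of k] posT[of u] by linarith
  qed
  then have "T (S (T u)) = 0"
    using psd_operator_inner_eq_zero_imp_zero[OF T] by (simp add: \<Phi>_def)
  then have "inner (T u) (S (T u)) = 0"
    using T unfolding psd_operator_def by (metis inner_zero_right)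
  then show ?thesis using psd_operator_inner_eq_zero_imp_zero[OF S] by blast
qed

lemma inner_vec_complex_eq_Re_sum:
  fixes x y :: "complex^'n"
  shows "inner x y = Re (\<Sum>i\<in>UNIV. cnj (x $ i) * y $ i)"
  by (simp add: inner_vec_def inner_complex_def)

lemma hermitian_mat_inner_symmetric:
  fixes A :: "complex^'n^'n"
  assumes "hermitian_mat A"
  shows "inner x (A *v y) = inner (A *v x) y"
proof -
  have entries: "cnj (A $ j $ i) = A $ i $ j" for i j
    using assms unfolding hermitian_mat_def adjoint_mat_def by (metis vec_lambda_beta)
  have "(\<Sum>i\<in>UNIV. cnj (x $ i) * (A *v y) $ i) = (\<Sum>i\<in>UNIV. cnj ((A *v x) $ i) * y $ i)"
    unfolding matrix_vector_mult_def
    by (simp add: sum_distrib_left sum_distrib_right entries) (subst sum.swap, simp add: mult_ac)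
  then show ?thesis by (simp add: inner_vec_complex_eq_Re_sum)
qed

lemma hpsd_imp_psd_operator:
  fixes A :: "complex^'n^'n"
  assumes "hpsd A"
  shows "psd_operator ((*v) A)"
proof -
  have "hermitian_mat A" and "\<And>x. 0 \<le> inner x (A *v x)"
    using assms by (simp_all add: hpsd_def inner_vec_complex_eq_Re_sum)
  then show ?thesis
    unfolding psd_operator_def
    using hermitian_mat_inner_symmetric bounded_linear.linear[OF matrix_vector_mul_bounded_linear]
    by blast
qed

lemma norm_mult_vec_le_spec_norm:
  fixes A :: "complex^'n^'n"
  shows "norm (A *v x) \<le> spec_norm A * norm x"
  unfolding spec_norm_def by (rule onorm) simp

lemma spec_norm_mat_1: "spec_norm (mat 1 :: complex^'n^'n) = 1"
proof -
  have "(*v) (mat 1 :: complex^'n^'n) = (\<lambda>x. x)" by (rule ext) simp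
  then show ?thesis unfolding spec_norm_def by (simp add: onorm_id)
qed

lemma hpsd_mult_eq_zero_if_spec_norm_le_1:
  fixes A C :: "complex^'n^'n"
  assumes "hpsd A" and "hpsd C" and "spec_norm (mat 1 + A ** C) \<le> 1"
  shows "A ** C = 0"
proof -
  have "norm (v + A *v (C *v v)) \<le> norm v" for v
    using norm_mult_vec_le_spec_norm[of "mat 1 + A ** C" v] assms(3)
      mult_right_mono[OF assms(3) norm_ge_zero, of v]
    by (simp add: matrix_vector_mult_add_rdistrib matrix_vector_mul_assoc)
  then have "A *v (C *v v) = 0" for v
    using psd_operator_comp_eq_zero_if_nonexpansive[OF hpsd_imp_psd_operator[OF assms(1)]
        hpsd_imp_psd_operator[OF assms(2)] matrix_vector_mul_bounded_linear] by blast
  then show ?thesis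
    by (subst matrix_eq) (simp add: matrix_vector_mul_assoc[symmetric])
qed

theorem proposition3p2:
  fixes A C :: "complex^'n^'n"
  assumes "hpsd A" and "hpsd C"
  shows "spec_norm (mat 1 + A ** C) \<ge> 1 \<and>
         (spec_norm (mat 1 + A ** C) = 1 \<longleftrightarrow> A ** C = 0)"
proof -
  have le_imp_zero: "spec_norm (mat 1 + A ** C) \<le> 1 \<Longrightarrow> A ** C = 0"
    using hpsd_mult_eq_zero_if_spec_norm_le_1 assms by blast
  have zero_imp_eq: "A ** C = 0 \<Longrightarrow> spec_norm (mat 1 + A ** C) = 1"
    by (simp add: spec_norm_mat_1)
  show ?thesis
    using le_imp_zero zero_imp_eq by fastforce
qed

end
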